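(* Let $\operatorname{sinc}(x)=\frac{\sin(\pi x)}{\pi x}$ for $x\neq 0$ and $\operatorname{sinc}(0)=1$. Let $\tau\in(0,1)$ and, for an integer $n\ge 1$, define \[ G(n,\tau)\;=\;\sum_{t\in\mathbb{Z}\setminus\{0\}}\operatorname{sinc}(t-\tau)^n \;=\;\sum_{t=1}^{\infty}\operatorname{sinc}(t-\tau)^n+\sum_{t=1}^{\infty}\operatorname{sinc}(-t-\tau)^n . \] Then \[ G(n,\tau)=\begin{cases} 1-\operatorname{sinc}(\tau) & \text{if } n=1,\\[2pt] \operatorname{sinc}(\tau)^n\Big(\tau^n\big(\zeta(n,\tau)+\zeta(n,-\tau)\big)-2\Big) & \text{if } n \text{ is even},\\[2pt] \operatorname{sinc}(\tau)^n\Big(\tau^n\big(\zeta^*(n,\tau)-\zeta^*(n,-\tau)\big)-2\Big) & \text{if } n\ge 3 \text{ is odd}. \end{cases} \]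
   Context: For an integer $s\ge 2$ and a real number $q$ that is not a non-positive integer, the Hurwitz zeta function is $\zeta(s,q)=\sum_{k=0}^{\infty}\frac{1}{(k+q)^s}$ and the alternating Hurwitz zeta function is $\zeta^*(s,q)=\sum_{k=0}^{\infty}\frac{(-1)^k}{(k+q)^s}$ (in particular these series are used with $q=\tau$ and $q=-\tau$, $\tau\in(0,1)$). *)

theory Defs
  imports "HOL-Analysis.Analysis"
begin

definition sinc :: "real \<Rightarrow> real" where
  "sinc x = (if x = 0 then 1 else sin (pi * x) / (pi * x))"

definition hurwitz_zeta :: "nat \<Rightarrow> real \<Rightarrow> real" where
  "hurwitz_zeta s q = (\<Sum>k. 1 / (real k + q) ^ s)"

definition alt_hurwitz_zeta :: "nat \<Rightarrow> real \<Rightarrow> real" where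
  "alt_hurwitz_zeta s q = (\<Sum>k. (-1) ^ k / (real k + q) ^ s)"

definition G :: "nat \<Rightarrow> real \<Rightarrow> real" where
  "G n \<tau> = (\<Sum>t. sinc (real (Suc t) - \<tau>) ^ n) + (\<Sum>t. sinc (- real (Suc t) - \<tau>) ^ n)"

end

theory Submission
  imports Defs
begin

(* For a natural number m, sin (pi (m + x)) = (-1)^m sin (pi x), hence
   sinc (m + x)^n = (x sinc x)^n ((-1)^m / (m + x))^n.  Both halves of G n tau are therefore
   tails of the series sum_k ((-1)^k / (k +- tau))^n, which is zeta (n, +-tau) for even n and
   zeta* (n, +-tau) for odd n; the two omitted k = 0 terms produce the -2.  For n = 1 the two
   conditionally convergent series combine into the partial fraction expansion of
   pi / sin (pi tau), obtained from the cotangent expansion (the reflection formula for Digamma)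
   and cot (x/2) - cot x = 1 / sin x. *)

lemma sin_pi_mult_neq_0:
  fixes x :: real assumes "x \<notin> \<int>"
  shows "sin (pi * x) \<noteq> 0"
  using assms by (auto simp: sin_zero_iff_int2)

lemma Gamma_reflection_real:
  fixes x :: real
  shows "Gamma x * Gamma (1 - x) = pi / sin (pi * x)"
proof -
  have "complex_of_real (Gamma x * Gamma (1 - x)) = of_real pi / sin (of_real pi * of_real x)"
    using Gamma_reflection_complex[of "of_real x"] Gamma_complex_of_real[of "1 - x"]
    by (simp add: Gamma_complex_of_real)
  also have "\<dots> = of_real (pi / sin (pi * x))"
    by (simp flip: sin_of_real)
  finally show ?thesis
    by (simp only: of_real_eq_iff)
qed

lemma Digamma_reflection_real:
  fixes x :: real assumes x: "x \<notin> \<int>"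
  shows "Digamma (1 - x) - Digamma x = pi * cot (pi * x)"
proof -
  \<comment> \<open>By the reflection formula h is constant near x; differentiate it.\<close>
  define h where "h y = Gamma y * Gamma (1 - y) * sin (pi * y)" for y :: real
  have nonpos: "x \<notin> \<int>\<^sub>\<le>\<^sub>0" "1 - x \<notin> \<int>\<^sub>\<le>\<^sub>0"
    using x Ints_diff[OF Ints_1, of "1 - x"] by auto
  have not_int: "y \<notin> \<int>" if "y \<in> {of_int \<lfloor>x\<rfloor> <..< of_int \<lfloor>x\<rfloor> + 1}" for y :: real
    using that floor_eq_iff[of y "\<lfloor>x\<rfloor>"] by (auto elim!: Ints_cases)
  have "of_int \<lfloor>x\<rfloor> < x"
    using x of_int_floor_le[of x] by (metis Ints_of_int order_le_less)
  then have "eventually (\<lambda>y. y \<in> {of_int \<lfloor>x\<rfloor> <..< of_int \<lfloor>x\<rfloor> + 1}) (nhds x)"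
    by (intro eventually_nhds_in_open) auto
  then have "eventually (\<lambda>y. h y = pi) (nhds x)"
  proof eventually_elim
    case (elim y)
    then have "sin (pi * y) \<noteq> 0"
      using not_int sin_pi_mult_neq_0 by blast
    then show ?case
      by (simp add: h_def Gamma_reflection_real)
  qed
  then have "(h has_field_derivative 0) (at x)"
    by (subst DERIV_cong_ev[OF refl _ refl]) (auto intro: DERIV_const)
  moreover have "(h has_field_derivative Gamma x * Gamma (1 - x) *
      ((Digamma x - Digamma (1 - x)) * sin (pi * x) + pi * cos (pi * x))) (at x)"
    unfolding h_def using nonpos
    by (auto intro!: derivative_eq_intros) (simp add: algebra_simps)
  ultimately have "Gamma x * Gamma (1 - x) *
      ((Digamma x - Digamma (1 - x)) * sin (pi * x) + pi * cos (pi * x)) = 0"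
    using DERIV_unique by blast
  moreover have "Gamma x * Gamma (1 - x) \<noteq> 0"
    using nonpos by (simp add: Gamma_nonzero)
  ultimately have "(Digamma x - Digamma (1 - x)) * sin (pi * x) + pi * cos (pi * x) = 0"
    by simp
  then show ?thesis
    using sin_pi_mult_neq_0[OF x] by (simp add: cot_def field_simps)
qed

lemma sums_cot_real:
  fixes x :: real assumes x: "x \<notin> \<int>"
  shows "(\<lambda>k. 1 / (x + real k) - 1 / (1 - x + real k)) sums (pi * cot (pi * x))"
proof -
  have "x \<noteq> 0" "1 - x \<noteq> 0"
    using x Ints_diff[OF Ints_1, of "1 - x"] by auto
  then have "(\<lambda>k. inverse (real (Suc k)) - inverse (y + real k)) sums (Digamma y + euler_mascheroni)"
    if "y \<in> {x, 1 - x}" for y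
    using that summable_Digamma[of y] by (auto simp: Digamma_def summable_sums)
  from sums_diff[OF this[of "1 - x"] this[of x]]
  have "(\<lambda>k. 1 / (x + real k) - 1 / (1 - x + real k)) sums (Digamma (1 - x) - Digamma x)"
    by (simp add: inverse_eq_divide)
  then show ?thesis
    using Digamma_reflection_real[OF x] by simp
qed

lemma cot_half_minus_cot:
  fixes x :: real assumes "sin x \<noteq> 0"
  shows "cot (x / 2) - cot x = 1 / sin x"
proof -
  define b where "b = x / 2"
  have x: "x = 2 * b"
    by (simp add: b_def)
  have "sin b \<noteq> 0" "cos b \<noteq> 0"
    using assms by (auto simp: x sin_double)
  then show ?thesis
    unfolding x cot_def sin_double cos_double by (simp add: field_simps power2_eq_square)
qed

lemma summable_alternating_inverse:
  fixes c :: real assumes "0 < c"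
  shows "summable (\<lambda>k. (-1) ^ k / (real k + c))"
proof -
  have "summable (\<lambda>k. (-1) ^ k * (1 / (real k + c)))"
  proof (rule summable_Leibniz'(1))
    have "filterlim (\<lambda>k. real k + c) at_top sequentially"
      using filterlim_tendsto_add_at_top[OF tendsto_const filterlim_real_sequentially, of c]
      by (simp add: add.commute)
    then show "(\<lambda>k. 1 / (real k + c)) \<longlonglongrightarrow> 0"
      by (intro tendsto_divide_0[OF tendsto_const] filterlim_at_top_imp_at_infinity)
    show "0 \<le> 1 / (real k + c)" for k
      using assms by simp
    show "1 / (real (Suc k) + c) \<le> 1 / (real k + c)" for k
      using assms by (intro divide_left_mono) auto
  qed
  then show ?thesis
    by simp
qed

lemma csc_partial_fractions:
  fixes t :: real assumes t: "0 < t" "t < 1"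
  shows "(\<Sum>k. (-1) ^ k / (real k + t)) + (\<Sum>k. (-1) ^ k / (real k + (1 - t))) = pi / sin (pi * t)"
proof -
  define a where "a k = (-1) ^ k / (real k + t) + (-1) ^ k / (real k + (1 - t))" for k
  have not_int: "t \<notin> \<int>" "t / 2 \<notin> \<int>"
    using t by (auto elim!: Ints_cases)
  have "a sums ((\<Sum>k. (-1) ^ k / (real k + t)) + (\<Sum>k. (-1) ^ k / (real k + (1 - t))))"
    unfolding a_def using t by (intro sums_add summable_sums summable_alternating_inverse) auto
  then have pairs_a: "(\<lambda>k. \<Sum>m\<in>{k*2..<k*2+2}. a m)
      sums ((\<Sum>k. (-1) ^ k / (real k + t)) + (\<Sum>k. (-1) ^ k / (real k + (1 - t))))"
    by (rule sums_group) simp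
  have pairs_cot: "(\<lambda>k. \<Sum>m\<in>{k*2..<k*2+2}. 1 / (t + real m) - 1 / (1 - t + real m))
      sums (pi * cot (pi * t))"
    using not_int by (intro sums_group sums_cot_real) auto
  have "pi * cot (pi * (t / 2)) - pi * cot (pi * t) = pi / sin (pi * t)"
    using cot_half_minus_cot[of "pi * t"] sin_pi_mult_neq_0[OF not_int(1)]
    by (simp add: right_diff_distrib[symmetric])
  with sums_diff[OF sums_cot_real[OF not_int(2)] pairs_cot]
  have "(\<lambda>k. (1 / (t / 2 + real k) - 1 / (1 - t / 2 + real k))
      - (\<Sum>m\<in>{k*2..<k*2+2}. 1 / (t + real m) - 1 / (1 - t + real m))) sums (pi / sin (pi * t))"
    by simp
  \<comment> \<open>Consecutive pairs of the alternating series are the cot series at t/2 minus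
    consecutive pairs of the cot series at t.\<close>
  moreover have "(1 / (t / 2 + real k) - 1 / (1 - t / 2 + real k))
      - (\<Sum>m\<in>{k*2..<k*2+2}. 1 / (t + real m) - 1 / (1 - t + real m))
      = (\<Sum>m\<in>{k*2..<k*2+2}. a m)" for k
  proof -
    have "{k*2..<k*2+2} = {2*k, 2*k+1}"
      by auto
    moreover have "1 / (t / 2 + real k) = 2 / (t + 2 * real k)"
      "1 / (1 - t / 2 + real k) = 2 / (1 - t + (2 * real k + 1))"
      using t by (simp_all add: field_simps)
    ultimately show ?thesis
      by (simp add: a_def algebra_simps)
  qed
  ultimately have "(\<lambda>k. \<Sum>m\<in>{k*2..<k*2+2}. a m) sums (pi / sin (pi * t))"
    by simp
  with pairs_a show ?thesis
    using sums_unique2 by blast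
qed

lemma sinc_minus [simp]: "sinc (- x) = sinc x"
  by (simp add: sinc_def)

lemma mult_sinc: "x * sinc x = sin (pi * x) / pi"
  by (simp add: sinc_def)

lemma sinc_of_nat_add:
  assumes "real m + x \<noteq> 0"
  shows "sinc (real m + x) = x * sinc x * ((-1) ^ m / (real m + x))"
proof -
  have "sin (pi * (real m + x)) = (-1) ^ m * sin (pi * x)"
    by (simp add: distrib_left sin_add)
  then show ?thesis
    using assms unfolding mult_sinc by (simp add: sinc_def)
qed

lemma sums_sinc_power_shift:
  fixes x :: real assumes x: "x \<notin> \<int>" and S: "(\<lambda>k. ((-1) ^ k / (real k + x)) ^ n) sums S"
  shows "(\<lambda>t. sinc (real (Suc t) + x) ^ n) sums ((x * sinc x) ^ n * S - sinc x ^ n)"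
proof -
  have "x \<noteq> 0"
    using x by auto
  have nz: "real (Suc t) + x \<noteq> 0" for t
    using x by (auto simp: add_eq_0_iff)
  have "sinc (real (Suc t) + x) ^ n = (x * sinc x) ^ n * ((-1) ^ Suc t / (real (Suc t) + x)) ^ n" for t
    by (simp only: sinc_of_nat_add[OF nz] power_mult_distrib)
  moreover have "(\<lambda>t. ((-1) ^ Suc t / (real (Suc t) + x)) ^ n) sums (S - (1 / x) ^ n)"
    using S by (subst sums_Suc_iff) simp
  ultimately have "(\<lambda>t. sinc (real (Suc t) + x) ^ n) sums ((x * sinc x) ^ n * (S - (1 / x) ^ n))"
    using sums_mult by simp
  moreover have "(x * sinc x) ^ n * (1 / x) ^ n = sinc x ^ n"
    using \<open>x \<noteq> 0\<close> by (simp flip: power_mult_distrib)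
  ultimately show ?thesis
    by (simp add: right_diff_distrib)
qed

lemma G_eq_alternating_sums:
  fixes \<tau> :: real
  assumes \<tau>: "\<tau> \<notin> \<int>"
    and summable: "\<And>q. q \<in> {\<tau>, - \<tau>} \<Longrightarrow> summable (\<lambda>k. ((-1) ^ k / (real k + q)) ^ n)"
  shows "G n \<tau> = sinc \<tau> ^ n * (\<tau> ^ n * ((\<Sum>k. ((-1) ^ k / (real k + \<tau>)) ^ n)
            + (-1) ^ n * (\<Sum>k. ((-1) ^ k / (real k - \<tau>)) ^ n)) - 2)"
proof -
  define S\<^sub>p where "S\<^sub>p = (\<Sum>k. ((-1) ^ k / (real k + \<tau>)) ^ n)"
  define S\<^sub>m where "S\<^sub>m = (\<Sum>k. ((-1) ^ k / (real k - \<tau>)) ^ n)"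
  have "- \<tau> \<notin> \<int>"
    using \<tau> by (metis Ints_minus minus_minus)
  moreover have "(\<lambda>k. ((-1) ^ k / (real k + - \<tau>)) ^ n) sums S\<^sub>m"
    unfolding S\<^sub>m_def using summable_sums[OF summable[of "- \<tau>"]] by simp
  ultimately have "(\<Sum>t. sinc (real (Suc t) + - \<tau>) ^ n) = (- \<tau> * sinc (- \<tau>)) ^ n * S\<^sub>m - sinc (- \<tau>) ^ n"
    by (rule sums_sinc_power_shift[THEN sums_unique, symmetric])
  then have minus: "(\<Sum>t. sinc (real (Suc t) - \<tau>) ^ n) = (-1) ^ n * (\<tau> * sinc \<tau>) ^ n * S\<^sub>m - sinc \<tau> ^ n"
    by (simp add: power_minus[of "\<tau> * sinc \<tau>"])
  have "(\<lambda>k. ((-1) ^ k / (real k + \<tau>)) ^ n) sums S\<^sub>p"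
    unfolding S\<^sub>p_def using summable_sums[OF summable[of \<tau>]] by simp
  with \<tau> have "(\<Sum>t. sinc (real (Suc t) + \<tau>) ^ n) = (\<tau> * sinc \<tau>) ^ n * S\<^sub>p - sinc \<tau> ^ n"
    by (rule sums_sinc_power_shift[THEN sums_unique, symmetric])
  moreover have "sinc (- real (Suc t) - \<tau>) = sinc (real (Suc t) + \<tau>)" for t
    using sinc_minus[of "real (Suc t) + \<tau>"] by (simp only: minus_add_distrib diff_conv_add_uminus)
  ultimately have plus: "(\<Sum>t. sinc (- real (Suc t) - \<tau>) ^ n) = (\<tau> * sinc \<tau>) ^ n * S\<^sub>p - sinc \<tau> ^ n"
    by simp
  show ?thesis
    unfolding G_def minus plus S\<^sub>p_def[symmetric] S\<^sub>m_def[symmetric]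
    by (simp add: power_mult_distrib ring_distribs)
qed

lemma summable_alternating_inverse_power:
  fixes q :: real assumes "q \<noteq> 0" "n \<ge> 2"
  shows "summable (\<lambda>k. ((-1) ^ k / (real k + q)) ^ n)"
proof (rule summable_comparison_test'[OF Polygamma_converges'[OF assms]])
  fix k assume "nat \<lceil>\<bar>q\<bar>\<rceil> + 1 \<le> k"
  then have "\<bar>q\<bar> < real k"
    using real_nat_ceiling_ge[of "\<bar>q\<bar>"] by linarith
  then show "norm (((-1) ^ k / (real k + q)) ^ n) \<le> inverse ((q + real k) ^ n)"
    by (simp add: power_divide power_abs abs_mult add.commute inverse_eq_divide)
qed

lemma hurwitz_zeta_even_eq:
  assumes "even n"
  shows "hurwitz_zeta n q = (\<Sum>k. ((-1) ^ k / (real k + q)) ^ n)"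
proof -
  have "((-1 :: real) ^ k) ^ n = 1" for k
    using assms by (subst power_mult[symmetric]) simp
  then show ?thesis
    by (simp add: hurwitz_zeta_def power_divide)
qed

lemma alt_hurwitz_zeta_odd_eq:
  assumes "odd n"
  shows "alt_hurwitz_zeta n q = (\<Sum>k. ((-1) ^ k / (real k + q)) ^ n)"
proof -
  have "((-1 :: real) ^ k) ^ n = (-1) ^ k" for k
    using assms by (subst power_mult[symmetric]) (simp add: minus_one_power_iff)
  then show ?thesis
    by (simp add: alt_hurwitz_zeta_def power_divide)
qed

lemma G_even:
  fixes \<tau> :: real assumes "\<tau> \<notin> \<int>" "even n" "n \<ge> 2"
  shows "G n \<tau> = sinc \<tau> ^ n * (\<tau> ^ n * (hurwitz_zeta n \<tau> + hurwitz_zeta n (- \<tau>)) - 2)"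
proof -
  have "\<tau> \<noteq> 0"
    using assms(1) by auto
  then have "summable (\<lambda>k. ((-1) ^ k / (real k + q)) ^ n)" if "q \<in> {\<tau>, - \<tau>}" for q
    using that \<open>n \<ge> 2\<close> by (auto intro: summable_alternating_inverse_power)
  from G_eq_alternating_sums[OF assms(1) this] show ?thesis
    using \<open>even n\<close> by (simp add: hurwitz_zeta_even_eq)
qed

lemma G_odd:
  fixes \<tau> :: real assumes "\<tau> \<notin> \<int>" "odd n" "n \<ge> 3"
  shows "G n \<tau> = sinc \<tau> ^ n * (\<tau> ^ n * (alt_hurwitz_zeta n \<tau> - alt_hurwitz_zeta n (- \<tau>)) - 2)"
proof -
  have "\<tau> \<noteq> 0"
    using assms(1) by auto
  then have "summable (\<lambda>k. ((-1) ^ k / (real k + q)) ^ n)" if "q \<in> {\<tau>, - \<tau>}" for q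
    using that \<open>n \<ge> 3\<close> by (auto intro: summable_alternating_inverse_power)
  from G_eq_alternating_sums[OF assms(1) this] show ?thesis
    using \<open>odd n\<close> by (simp add: alt_hurwitz_zeta_odd_eq)
qed

lemma G_one:
  fixes \<tau> :: real assumes \<tau>: "0 < \<tau>" "\<tau> < 1"
  shows "G 1 \<tau> = 1 - sinc \<tau>"
proof -
  define P where "P = (\<Sum>k. (-1) ^ k / (real k + \<tau>))"
  define Q where "Q = (\<Sum>k. (-1) ^ k / (real k + (1 - \<tau>)))"
  have plus: "(\<lambda>k. (-1) ^ k / (real k + \<tau>)) sums P"
    unfolding P_def using \<tau> by (intro summable_sums summable_alternating_inverse)
  have "(\<lambda>k. - ((-1) ^ k / (real k + (1 - \<tau>)))) sums (- Q)"
    unfolding Q_def using \<tau> by (intro sums_minus summable_sums summable_alternating_inverse) simp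
  then have "(\<lambda>k. (-1) ^ Suc k / (real (Suc k) - \<tau>)) sums (- Q)"
    by (simp add: algebra_simps)
  then have minus: "(\<lambda>k. (-1) ^ k / (real k - \<tau>)) sums (- Q - 1 / \<tau>)"
    using sums_Suc_iff[of "\<lambda>k. (-1) ^ k / (real k - \<tau>)"] by simp
  have not_int: "\<tau> \<notin> \<int>"
    using \<tau> by (auto elim!: Ints_cases)
  have "summable (\<lambda>k. ((-1) ^ k / (real k + q)) ^ 1)" if "q \<in> {\<tau>, - \<tau>}" for q
    using that plus minus by (auto simp: sums_iff)
  from G_eq_alternating_sums[OF not_int this]
  have "G 1 \<tau> = sinc \<tau> * (\<tau> * (P - (- Q - 1 / \<tau>)) - 2)"
    using plus minus by (simp add: sums_iff)
  also have "\<dots> = sinc \<tau> * (\<tau> * (P + Q) - 1)"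
    using \<tau> by (simp add: field_simps)
  also have "P + Q = pi / sin (pi * \<tau>)"
    unfolding P_def Q_def using \<tau> by (rule csc_partial_fractions)
  also have "sinc \<tau> * (\<tau> * (pi / sin (pi * \<tau>)) - 1) = 1 - sinc \<tau>"
    using sin_pi_mult_neq_0[OF not_int] mult_sinc[of \<tau>] by (simp add: field_simps)
  finally show ?thesis .
qed

theorem lemma1:
  fixes n :: nat and \<tau> :: real
  assumes "0 < \<tau>" and "\<tau> < 1" and "n \<ge> 1"
  shows "(n = 1 \<longrightarrow> G n \<tau> = 1 - sinc \<tau>)
       \<and> (even n \<longrightarrow> G n \<tau> = sinc \<tau> ^ n *
              (\<tau> ^ n * (hurwitz_zeta n \<tau> + hurwitz_zeta n (- \<tau>)) - 2))
       \<and> (odd n \<and> n \<ge> 3 \<longrightarrow> G n \<tau> = sinc \<tau> ^ n *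
              (\<tau> ^ n * (alt_hurwitz_zeta n \<tau> - alt_hurwitz_zeta n (- \<tau>)) - 2))"
proof -
  have \<tau>: "\<tau> \<notin> \<int>"
    using assms(1,2) by (auto elim!: Ints_cases)
  have "n \<ge> 2" if "even n"
    using that assms(3) by presburger
  then show ?thesis
    using G_one[OF assms(1,2)] G_even[OF \<tau>] G_odd[OF \<tau>] by auto
qed

end
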